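(* Suppose that for each $r,k\in\mathbb{N}$ with $k\le r$, $\{Y^{(k)}_{r,i}:i\in\{1,\dots,k\}\}$ is a collection of independent random variables. Suppose there exist $\alpha\in(0,1]$, $c>0$, $r_0$ and $\theta_0$ such that for all $r,k\in\mathbb{N}$, $i\in\{1,\dots,k\}$ and $\theta\in\mathbb{R}$ with $r/k>r_0$ and $\theta>\theta_0$, $$\mathbb{P}\left(Y^{(k)}_{r,i}>\theta (r/k)^{1/3}\right)\le\exp(-c\theta^\alpha).$$ Finally, let $Y_r$ be a random variable such that $Y_r\le\sum_{i=1}^kY^{(k)}_{r,i}$ for every $k\in\mathbb{N}$ with $r/k>r_0$. Then there exist $\tilde\theta_0=\tilde\theta_0(c,\alpha,\theta_0,r_0)$ and $c'=c'(c,\alpha,\theta_0,r_0)>0$ such that for all $\tilde\theta_0<\theta<r^{2/3}$ and $r>r_0$, $$\mathbb{P}\left(Y_r>\theta r^{1/3}\right)\le\exp\left(-c'\theta^{3\alpha/2}\right).$$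
   Context: Convention: quantities such as $k$ and $r/k$ that are required to be integers are rounded down when expressed as real numbers. *)

theory Defs
  imports "HOL-Probability.Probability"
begin

end

theory Submission
  imports Defs "HOL-Real_Asymp.Real_Asymp"
begin

(* Divided by (r/k)^(1/3), the block variables have tails exp (-c t^alpha) beyond theta0.
   For a sum of k independent such variables, truncate every summand at the level x: either
   some summand exceeds x (union bound: k exp (-c x^alpha)), or the truncated sum exceeds x,
   which a Chernoff bound with parameter l = (c/4) x^(alpha-1) makes smaller than
   exp (-(c/8) x^alpha). The moment generating function of a truncated summand is estimated
   by a layer-cake decomposition over the dyadic levels T 2^n; the layers sum to a constant K,
   and the resulting bound exp (l (T + K)) per summand is affordable as long as x is at least
   a constant times k.
   Choosing k of order theta^(3/2) and x = theta k^(1/3) gives x (r/k)^(1/3) = theta r^(1/3)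
   and x^alpha of order theta^(3 alpha/2). *)

lemma mono_min_le_layer_sum:
  fixes f :: "real \<Rightarrow> real" and t :: "nat \<Rightarrow> real"
  assumes "mono f" and "incseq t"
  shows "f (min w (t N)) \<le> f (t 0) + (\<Sum>n<N. (f (t (Suc n)) - f (t n)) * of_bool (t n < w))"
proof (induction N)
  case 0
  show ?case using \<open>mono f\<close> by (simp add: monoD)
next
  case (Suc N)
  show ?case
  proof (cases "t N < w")
    case True
    have "f (min w (t (Suc N))) \<le> f (t (Suc N))"
      using \<open>mono f\<close> by (simp add: monoD)
    with Suc.IH True show ?thesis by simp
  next
    case False
    then have "min w (t (Suc N)) = min w (t N)"
      using incseq_SucD[OF \<open>incseq t\<close>, of N] by (simp add: min_def)
    with Suc.IH False show ?thesis by simp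
  qed
qed

lemma (in prob_space) expectation_mono_min_le_layer_sum:
  fixes f :: "real \<Rightarrow> real" and t :: "nat \<Rightarrow> real"
  assumes f: "mono f" "\<And>y. 0 \<le> f y" and "incseq t"
    and W[measurable]: "W \<in> borel_measurable M"
  shows "expectation (\<lambda>\<omega>. f (min (W \<omega>) (t N)))
    \<le> f (t 0) + (\<Sum>n<N. (f (t (Suc n)) - f (t n)) * prob {\<omega> \<in> space M. t n < W \<omega>})"
proof -
  have [measurable]: "f \<in> borel_measurable borel"
    using f(1) by (rule borel_measurable_mono)
  have layer_integrable: "integrable M (\<lambda>\<omega>. of_bool (t n < W \<omega>) :: real)" for n
    by (rule integrable_const_bound[where B = 1]) auto
  have layer_expectation: "expectation (\<lambda>\<omega>. of_bool (t n < W \<omega>)) = prob {\<omega> \<in> space M. t n < W \<omega>}" for n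
    by (subst Bochner_Integration.integral_cong[where g = "indicator {\<omega> \<in> space M. t n < W \<omega>}"])
      (auto simp: indicator_def)
  have "expectation (\<lambda>\<omega>. f (min (W \<omega>) (t N)))
      \<le> expectation (\<lambda>\<omega>. f (t 0) + (\<Sum>n<N. (f (t (Suc n)) - f (t n)) * of_bool (t n < W \<omega>)))"
  proof (rule integral_mono)
    show "integrable M (\<lambda>\<omega>. f (min (W \<omega>) (t N)))"
      by (rule integrable_const_bound[where B = "f (t N)"]) (use f in \<open>auto simp: monoD\<close>)
    show "integrable M (\<lambda>\<omega>. f (t 0) + (\<Sum>n<N. (f (t (Suc n)) - f (t n)) * of_bool (t n < W \<omega>)))"
      by (intro Bochner_Integration.integrable_add Bochner_Integration.integrable_sum
          integrable_mult_right layer_integrable) simp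
  qed (rule mono_min_le_layer_sum[OF assms(1,3)])
  also have "\<dots> = f (t 0) + (\<Sum>n<N. (f (t (Suc n)) - f (t n)) * prob {\<omega> \<in> space M. t n < W \<omega>})"
    using layer_integrable by (simp add: layer_expectation prob_space del: sum_mult_of_bool_eq)
  finally show ?thesis .
qed

lemma exp_layer_increment_le:
  fixes l y p c \<alpha> :: real
  assumes "0 \<le> l" "0 \<le> y" and rate: "2 * l * y \<le> c/2 * y powr \<alpha>"
    and p: "0 \<le> p" "p \<le> exp (- c * y powr \<alpha>)"
  shows "(exp (l * (2 * y)) - exp (l * y)) * p \<le> l * y * exp (- (c/2) * y powr \<alpha>)"
proof -
  have "exp (l * (2 * y)) * (1 - l * y) \<le> exp (l * (2 * y)) * exp (- (l * y))"
    using exp_ge_add_one_self[of "- (l * y)"] by (intro mult_left_mono) auto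
  also have "\<dots> = exp (l * y)"
    by (simp flip: exp_add)
  finally have increment: "exp (l * (2 * y)) - exp (l * y) \<le> l * y * exp (l * (2 * y))"
    by (simp add: algebra_simps)
  have "(exp (l * (2 * y)) - exp (l * y)) * p \<le> l * y * exp (l * (2 * y)) * exp (- c * y powr \<alpha>)"
    using increment p assms(1,2) by (intro mult_mono) auto
  also have "\<dots> = l * y * exp (l * (2 * y) - c * y powr \<alpha>)"
    by (simp add: mult.assoc flip: exp_add)
  also have "\<dots> \<le> l * y * exp (- (c/2) * y powr \<alpha>)"
    using rate assms(1,2) by (intro mult_left_mono) auto
  finally show ?thesis .
qed

lemma stretched_exp_rate_le:
  fixes c \<alpha> l x y :: real
  assumes "0 \<le> c" "\<alpha> \<le> 1" "0 < y" "y \<le> x" "l \<le> c/4 * x powr (\<alpha> - 1)"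
  shows "2 * l * y \<le> c/2 * y powr \<alpha>"
proof -
  have "2 * l * y \<le> c/2 * x powr (\<alpha> - 1) * y"
    using assms by (intro mult_right_mono) auto
  also have "\<dots> \<le> c/2 * y powr (\<alpha> - 1) * y"
    using assms by (intro mult_right_mono mult_left_mono powr_mono2') auto
  also have "\<dots> = c/2 * y powr \<alpha>"
    using assms by (simp add: powr_diff)
  finally show ?thesis .
qed

lemma exp_min_layer_increment_le:
  fixes c \<alpha> l x y p :: real
  assumes "0 \<le> c" "\<alpha> \<le> 1" "0 \<le> l" "l \<le> c/4 * x powr (\<alpha> - 1)" "0 < y"
    and p: "0 \<le> p" "p \<le> exp (- c * y powr \<alpha>)"
  shows "(exp (l * min (2 * y) x) - exp (l * min y x)) * p \<le> l * y * exp (- (c/2) * y powr \<alpha>)"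
proof (cases "y < x")
  case True
  have "exp (l * min (2 * y) x) - exp (l * min y x) \<le> exp (l * (2 * y)) - exp (l * y)"
    using True \<open>0 \<le> l\<close> by (auto intro: mult_left_mono)
  then have "(exp (l * min (2 * y) x) - exp (l * min y x)) * p \<le> (exp (l * (2 * y)) - exp (l * y)) * p"
    using p by (intro mult_right_mono)
  also have "\<dots> \<le> l * y * exp (- (c/2) * y powr \<alpha>)"
    using assms True by (intro exp_layer_increment_le stretched_exp_rate_le) auto
  finally show ?thesis .
next
  case False
  then show ?thesis
    using assms by (simp add: min_def)
qed

lemma exp_plus_le_exp_add:
  fixes a b :: real
  assumes "0 \<le> a" "0 \<le> b"
  shows "exp a + b \<le> exp (a + b)"
proof -
  have "exp a + b \<le> exp a * (1 + b)"
    using assms mult_right_mono[of 1 "exp a" b] by (simp add: algebra_simps)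
  also have "\<dots> \<le> exp a * exp b"
    by (intro mult_left_mono exp_ge_add_one_self) simp
  finally show ?thesis
    by (simp add: exp_add)
qed

lemma (in prob_space) truncated_exp_moment_le:
  fixes W :: "'a \<Rightarrow> real" and c \<alpha> \<theta>0 T K l x :: real
  assumes W[measurable]: "W \<in> borel_measurable M"
    and tail: "\<And>t. \<theta>0 < t \<Longrightarrow> prob {\<omega> \<in> space M. t < W \<omega>} \<le> exp (- c * t powr \<alpha>)"
    and "0 \<le> c" "\<alpha> \<le> 1" and T: "\<theta>0 < T" "0 < T" "T \<le> x"
    and K: "\<And>N. (\<Sum>n<N. T * 2^n * exp (- (c/2) * (T * 2^n) powr \<alpha>)) \<le> K"
    and l: "0 \<le> l" "l \<le> c/4 * x powr (\<alpha> - 1)"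
  shows "expectation (\<lambda>\<omega>. exp (l * min (W \<omega>) x)) \<le> exp (l * (T + K))"
proof -
  define f where "f y = exp (l * min y x)" for y
  define t where "t n = T * 2^n" for n :: nat
  have "mono f"
    using l(1) by (auto simp: f_def mono_def intro!: mult_left_mono)
  have "incseq t"
    using T by (auto simp: t_def incseq_def intro!: power_increasing)
  obtain N where "x / T < 2 ^ N"
    using real_arch_pow[of 2 "x / T"] by auto
  then have "x \<le> t N"
    using T by (simp add: t_def field_simps)
  have "expectation (\<lambda>\<omega>. exp (l * min (W \<omega>) x)) = expectation (\<lambda>\<omega>. f (min (W \<omega>) (t N)))"
    using \<open>x \<le> t N\<close> by (simp add: f_def min.assoc)
  also have "\<dots> \<le> f (t 0) + (\<Sum>n<N. (f (t (Suc n)) - f (t n)) * prob {\<omega> \<in> space M. t n < W \<omega>})"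
    by (rule expectation_mono_min_le_layer_sum[OF \<open>mono f\<close> _ \<open>incseq t\<close> W]) (simp add: f_def)
  also have "\<dots> \<le> exp (l * T) + (\<Sum>n<N. l * (t n * exp (- (c/2) * t n powr \<alpha>)))"
  proof (intro add_mono sum_mono)
    show "f (t 0) \<le> exp (l * T)"
      using T by (simp add: f_def t_def)
  next
    fix n
    have "T \<le> t n"
      using T(2) by (simp add: t_def)
    then have "(exp (l * min (2 * t n) x) - exp (l * min (t n) x)) * prob {\<omega> \<in> space M. t n < W \<omega>}
        \<le> l * t n * exp (- (c/2) * t n powr \<alpha>)"
      using T tail[of "t n"] assms(3,4) l by (intro exp_min_layer_increment_le) auto
    then show "(f (t (Suc n)) - f (t n)) * prob {\<omega> \<in> space M. t n < W \<omega>}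
        \<le> l * (t n * exp (- (c/2) * t n powr \<alpha>))"
      by (simp add: f_def t_def mult.assoc mult.left_commute)
  qed
  also have "\<dots> \<le> exp (l * T) + l * K"
    using K[of N] l(1) by (simp add: t_def mult_left_mono flip: sum_distrib_left)
  also have "\<dots> \<le> exp (l * (T + K))"
    using exp_plus_le_exp_add[of "l * T" "l * K"] T l(1) K[of 0] by (simp add: distrib_left)
  finally show ?thesis .
qed

lemma (in prob_space) indep_truncated_sum_tail_le:
  fixes W :: "'i \<Rightarrow> 'a \<Rightarrow> real" and l x B :: real
  assumes "finite I" and W[measurable]: "\<And>i. i \<in> I \<Longrightarrow> W i \<in> borel_measurable M"
    and indep: "indep_vars (\<lambda>_. borel) W I" and "0 < l"
    and mgf: "\<And>i. i \<in> I \<Longrightarrow> expectation (\<lambda>\<omega>. exp (l * min (W i \<omega>) x)) \<le> B"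
  shows "prob {\<omega> \<in> space M. x \<le> (\<Sum>i\<in>I. min (W i \<omega>) x)} \<le> exp (- l * x) * B ^ card I"
proof -
  define Z where "Z i \<omega> = exp (l * min (W i \<omega>) x)" for i \<omega>
  have Z_nonneg: "0 \<le> Z i \<omega>" for i \<omega>
    by (simp add: Z_def)
  have Z_indep: "indep_vars (\<lambda>_. borel) Z I"
    unfolding Z_def by (rule indep_vars_compose2[OF indep]) measurable
  have Z_integrable: "integrable M (Z i)" if "i \<in> I" for i
  proof -
    have [measurable]: "W i \<in> borel_measurable M"
      using that by (rule W)
    show ?thesis
      unfolding Z_def by (rule integrable_const_bound[where B = "exp (l * x)"])
        (use \<open>0 < l\<close> in \<open>auto intro!: mult_left_mono\<close>)
  qed
  have "(\<Prod>i\<in>I. Z i \<omega>) = exp (l * (\<Sum>i\<in>I. min (W i \<omega>) x))" for \<omega>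
    using \<open>finite I\<close> by (simp add: Z_def sum_distrib_left exp_sum)
  then have "{\<omega> \<in> space M. x \<le> (\<Sum>i\<in>I. min (W i \<omega>) x)} = {\<omega> \<in> space M. exp (l * x) \<le> (\<Prod>i\<in>I. Z i \<omega>)}"
    using \<open>0 < l\<close> by simp
  also have "prob \<dots> \<le> expectation (\<lambda>\<omega>. \<Prod>i\<in>I. Z i \<omega>) / exp (l * x)"
    using \<open>finite I\<close> Z_indep Z_integrable
    by (intro integral_Markov_inequality_measure[where A = "space M"] indep_vars_integrable)
      (auto simp: prod_nonneg Z_nonneg)
  also have "expectation (\<lambda>\<omega>. \<Prod>i\<in>I. Z i \<omega>) = (\<Prod>i\<in>I. expectation (Z i))"
    using \<open>finite I\<close> Z_indep Z_integrable by (rule indep_vars_lebesgue_integral)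
  also have "\<dots> \<le> (\<Prod>i\<in>I. B)"
    using mgf by (intro prod_mono) (auto simp: Z_def[abs_def] intro!: integral_nonneg_AE)
  finally show ?thesis
    by (simp add: exp_minus divide_right_mono field_simps)
qed

lemma (in prob_space) prob_sum_gt_le_truncated:
  fixes W :: "'i \<Rightarrow> 'a \<Rightarrow> real" and x :: real
  assumes "finite I" and W[measurable]: "\<And>i. i \<in> I \<Longrightarrow> W i \<in> borel_measurable M"
  shows "prob {\<omega> \<in> space M. x < (\<Sum>i\<in>I. W i \<omega>)}
    \<le> (\<Sum>i\<in>I. prob {\<omega> \<in> space M. x < W i \<omega>}) + prob {\<omega> \<in> space M. x \<le> (\<Sum>i\<in>I. min (W i \<omega>) x)}"
proof -
  define exceeding where "exceeding = (\<Union>i\<in>I. {\<omega> \<in> space M. x < W i \<omega>})"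
  define truncated where "truncated = {\<omega> \<in> space M. x \<le> (\<Sum>i\<in>I. min (W i \<omega>) x)}"
  have exceeding_i: "{\<omega> \<in> space M. x < W i \<omega>} \<in> sets M" if "i \<in> I" for i
    using W[OF that] by measurable
  have [measurable]: "exceeding \<in> sets M"
    unfolding exceeding_def using \<open>finite I\<close> exceeding_i by (rule sets.finite_UN)
  have [measurable]: "(\<lambda>\<omega>. \<Sum>i\<in>I. min (W i \<omega>) x) \<in> borel_measurable M"
    using W by (intro borel_measurable_sum) measurable
  have [measurable]: "truncated \<in> sets M"
    unfolding truncated_def by measurable
  have "{\<omega> \<in> space M. x < (\<Sum>i\<in>I. W i \<omega>)} \<subseteq> exceeding \<union> truncated"
  proof
    fix \<omega> assume \<omega>: "\<omega> \<in> {\<omega> \<in> space M. x < (\<Sum>i\<in>I. W i \<omega>)}"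
    show "\<omega> \<in> exceeding \<union> truncated"
    proof (cases "\<omega> \<in> exceeding")
      case False
      then have "(\<Sum>i\<in>I. min (W i \<omega>) x) = (\<Sum>i\<in>I. W i \<omega>)"
        using \<omega> by (intro sum.cong) (auto simp: exceeding_def)
      then show ?thesis
        using \<omega> by (simp add: truncated_def)
    qed simp
  qed
  then have "prob {\<omega> \<in> space M. x < (\<Sum>i\<in>I. W i \<omega>)} \<le> prob (exceeding \<union> truncated)"
    by (intro finite_measure_mono) measurable
  also have "\<dots> \<le> prob exceeding + prob truncated"
    by (rule measure_Un_le) measurable
  also have "prob exceeding \<le> (\<Sum>i\<in>I. prob {\<omega> \<in> space M. x < W i \<omega>})"
    unfolding exceeding_def using \<open>finite I\<close> exceeding_i by (rule measure_UNION_le)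
  finally show ?thesis
    by (simp add: truncated_def)
qed

lemma (in prob_space) indep_sum_tail_le:
  fixes W :: "'i \<Rightarrow> 'a \<Rightarrow> real" and c \<alpha> \<theta>0 T K x :: real
  assumes "finite I" and W[measurable]: "\<And>i. i \<in> I \<Longrightarrow> W i \<in> borel_measurable M"
    and indep: "indep_vars (\<lambda>_. borel) W I"
    and tail: "\<And>i t. i \<in> I \<Longrightarrow> \<theta>0 < t \<Longrightarrow> prob {\<omega> \<in> space M. t < W i \<omega>} \<le> exp (- c * t powr \<alpha>)"
    and "0 < c" "\<alpha> \<le> 1" and T: "\<theta>0 < T" "0 < T" "T \<le> x"
    and K: "\<And>N. (\<Sum>n<N. T * 2^n * exp (- (c/2) * (T * 2^n) powr \<alpha>)) \<le> K"
    and x: "2 * (T + K) * card I \<le> x"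
  shows "prob {\<omega> \<in> space M. x < (\<Sum>i\<in>I. W i \<omega>)}
    \<le> card I * exp (- c * x powr \<alpha>) + exp (- (c/8) * x powr \<alpha>)"
proof -
  define l where "l = c/4 * x powr (\<alpha> - 1)"
  have "0 < l"
    using \<open>0 < c\<close> T by (simp add: l_def)
  have lx: "l * x = c/4 * x powr \<alpha>"
    using T by (simp add: l_def powr_diff)
  have "prob {\<omega> \<in> space M. x < (\<Sum>i\<in>I. W i \<omega>)}
      \<le> (\<Sum>i\<in>I. prob {\<omega> \<in> space M. x < W i \<omega>}) + prob {\<omega> \<in> space M. x \<le> (\<Sum>i\<in>I. min (W i \<omega>) x)}"
    using \<open>finite I\<close> W by (rule prob_sum_gt_le_truncated)
  also have "(\<Sum>i\<in>I. prob {\<omega> \<in> space M. x < W i \<omega>}) \<le> (\<Sum>i\<in>I. exp (- c * x powr \<alpha>))"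
    using tail T by (intro sum_mono) auto
  also have "prob {\<omega> \<in> space M. x \<le> (\<Sum>i\<in>I. min (W i \<omega>) x)} \<le> exp (- l * x) * exp (l * (T + K)) ^ card I"
    using \<open>finite I\<close> W indep \<open>0 < l\<close>
  proof (rule indep_truncated_sum_tail_le)
    fix i assume "i \<in> I"
    then show "expectation (\<lambda>\<omega>. exp (l * min (W i \<omega>) x)) \<le> exp (l * (T + K))"
      using \<open>0 < c\<close> \<open>\<alpha> \<le> 1\<close> T K \<open>0 < l\<close>
      by (intro truncated_exp_moment_le[OF W[OF \<open>i \<in> I\<close>] tail[OF \<open>i \<in> I\<close>]]) (auto simp: l_def)
  qed
  also have "exp (- l * x) * exp (l * (T + K)) ^ card I = exp (- l * x + card I * (l * (T + K)))"
    by (simp only: exp_of_nat_mult exp_add)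
  also have "\<dots> \<le> exp (- (c/8) * x powr \<alpha>)"
  proof -
    have "l * (card I * (T + K)) \<le> l * (x / 2)"
      using x \<open>0 < l\<close> by (intro mult_left_mono) (auto simp: algebra_simps)
    then show ?thesis
      using lx by (simp add: algebra_simps)
  qed
  finally show ?thesis
    by simp
qed

lemma (in prob_space) indep_scaled_sum_tail_le:
  fixes Y :: "'i \<Rightarrow> 'a \<Rightarrow> real" and c \<alpha> \<theta>0 T K s x :: real
  assumes "finite I" "0 < s" and Y: "\<And>i. i \<in> I \<Longrightarrow> Y i \<in> borel_measurable M"
    and indep: "indep_vars (\<lambda>_. borel) Y I"
    and tail: "\<And>i t. i \<in> I \<Longrightarrow> \<theta>0 < t \<Longrightarrow> prob {\<omega> \<in> space M. t * s < Y i \<omega>} \<le> exp (- c * t powr \<alpha>)"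
    and "0 < c" "\<alpha> \<le> 1" and T: "\<theta>0 < T" "0 < T" "T \<le> x"
    and K: "\<And>N. (\<Sum>n<N. T * 2^n * exp (- (c/2) * (T * 2^n) powr \<alpha>)) \<le> K"
    and x: "2 * (T + K) * card I \<le> x"
  shows "prob {\<omega> \<in> space M. x * s < (\<Sum>i\<in>I. Y i \<omega>)}
    \<le> card I * exp (- c * x powr \<alpha>) + exp (- (c/8) * x powr \<alpha>)"
proof -
  define W where "W i \<omega> = Y i \<omega> / s" for i \<omega>
  have W: "W i \<in> borel_measurable M" if "i \<in> I" for i
    using Y[OF that] unfolding W_def by measurable
  have "indep_vars (\<lambda>_. borel) (\<lambda>i \<omega>. (\<lambda>y. y / s) (Y i \<omega>)) I"
    using indep by (rule indep_vars_compose2) measurable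
  then have W_indep: "indep_vars (\<lambda>_. borel) W I"
    by (simp add: W_def[abs_def])
  have rescale: "{\<omega> \<in> space M. t * s < Y i \<omega>} = {\<omega> \<in> space M. t < W i \<omega>}" for i t
    using \<open>0 < s\<close> by (auto simp: W_def pos_less_divide_eq)
  have "{\<omega> \<in> space M. x * s < (\<Sum>i\<in>I. Y i \<omega>)} = {\<omega> \<in> space M. x < (\<Sum>i\<in>I. W i \<omega>)}"
    using \<open>0 < s\<close> by (auto simp: W_def pos_less_divide_eq simp flip: sum_divide_distrib)
  also have "prob \<dots> \<le> card I * exp (- c * x powr \<alpha>) + exp (- (c/8) * x powr \<alpha>)"
    using assms W W_indep tail by (intro indep_sum_tail_le[where T = T and K = K]) (auto simp: rescale)
  finally show ?thesis .
qed

lemma summable_dyadic_stretched_exp: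
  fixes a b T :: real
  assumes "0 < a" "0 < b" "0 < T"
  shows "summable (\<lambda>n. T * 2^n * exp (- a * (T * 2^n) powr b))"
proof (rule summable_comparison_test_bigo)
  show "summable (\<lambda>n. norm ((1/2 :: real) ^ n))"
    by simp
  show "(\<lambda>n. T * 2^n * exp (- a * (T * 2^n) powr b)) \<in> O(\<lambda>n. (1/2) ^ n)"
    using assms by real_asymp
qed

lemma eventually_linear_stretched_exp_le:
  fixes c \<alpha> :: real
  assumes "0 < c" "0 < \<alpha>"
  shows "\<forall>\<^sub>F x in at_top. \<forall>k \<le> x.
    k * exp (- c * x powr \<alpha>) + exp (- (c/8) * x powr \<alpha>) \<le> exp (- (c/16) * x powr \<alpha>)"
proof -
  have "\<forall>\<^sub>F x in at_top. x * exp (- c * x powr \<alpha>) + exp (- (c/8) * x powr \<alpha>) \<le> exp (- (c/16) * x powr \<alpha>)"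
    using assms by real_asymp
  then show ?thesis
    by eventually_elim (meson add_right_mono exp_ge_zero mult_right_mono order_trans)
qed

lemma indep_sum_stretched_exp_tail:
  fixes c \<alpha> \<theta>0 :: real
  assumes "0 < \<alpha>" "\<alpha> \<le> 1" "0 < c"
  obtains A x1 :: real where "1 \<le> A"
    and "\<And>(M :: 'a measure) (Y :: 'i \<Rightarrow> 'a \<Rightarrow> real) I s x.
      prob_space M \<Longrightarrow> finite I \<Longrightarrow> 0 < s \<Longrightarrow>
      (\<And>i. i \<in> I \<Longrightarrow> Y i \<in> borel_measurable M) \<Longrightarrow>
      prob_space.indep_vars M (\<lambda>_. borel) Y I \<Longrightarrow>
      (\<And>i t. i \<in> I \<Longrightarrow> \<theta>0 < t \<Longrightarrow> measure M {\<omega> \<in> space M. t * s < Y i \<omega>} \<le> exp (- c * t powr \<alpha>)) \<Longrightarrow>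
      x1 \<le> x \<Longrightarrow> A * card I \<le> x \<Longrightarrow>
      measure M {\<omega> \<in> space M. x * s < (\<Sum>i\<in>I. Y i \<omega>)} \<le> exp (- (c/16) * x powr \<alpha>)"
proof -
  define T where "T = max \<theta>0 0 + 1"
  define K where "K = (\<Sum>n. T * 2^n * exp (- (c/2) * (T * 2^n) powr \<alpha>))"
  have T: "\<theta>0 < T" "1 \<le> T"
    by (auto simp: T_def)
  have K: "(\<Sum>n<N. T * 2^n * exp (- (c/2) * (T * 2^n) powr \<alpha>)) \<le> K" for N
    unfolding K_def using assms T
    by (intro sum_le_suminf summable_dyadic_stretched_exp) auto
  obtain x1 where x1: "\<And>x k. x1 \<le> x \<Longrightarrow> k \<le> x \<Longrightarrow>
      k * exp (- c * x powr \<alpha>) + exp (- (c/8) * x powr \<alpha>) \<le> exp (- (c/16) * x powr \<alpha>)"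
    using eventually_linear_stretched_exp_le[OF \<open>0 < c\<close> \<open>0 < \<alpha>\<close>]
    by (auto simp: eventually_at_top_linorder)
  show ?thesis
  proof (rule that)
    show "1 \<le> 2 * (T + K)"
      using T K[of 0] by simp
  next
    fix M :: "'a measure" and Y :: "'i \<Rightarrow> 'a \<Rightarrow> real" and I s x
    assume "prob_space M" and "finite I" and "0 < s"
      and Y: "\<And>i. i \<in> I \<Longrightarrow> Y i \<in> borel_measurable M"
      and indep: "prob_space.indep_vars M (\<lambda>_. borel) Y I"
      and tail: "\<And>i t. i \<in> I \<Longrightarrow> \<theta>0 < t \<Longrightarrow> measure M {\<omega> \<in> space M. t * s < Y i \<omega>} \<le> exp (- c * t powr \<alpha>)"
      and x: "max x1 T \<le> x" "2 * (T + K) * card I \<le> x"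
    have "measure M {\<omega> \<in> space M. x * s < (\<Sum>i\<in>I. Y i \<omega>)}
        \<le> card I * exp (- c * x powr \<alpha>) + exp (- (c/8) * x powr \<alpha>)"
      using \<open>finite I\<close> \<open>0 < s\<close> Y indep tail \<open>0 < c\<close> \<open>\<alpha> \<le> 1\<close> T K x
      by (intro prob_space.indep_scaled_sum_tail_le[OF \<open>prob_space M\<close>, where T = T and K = K]) auto
    also have "\<dots> \<le> exp (- (c/16) * x powr \<alpha>)"
    proof (rule x1)
      have "1 * real (card I) \<le> 2 * (T + K) * card I"
        using T K[of 0] by (intro mult_right_mono) auto
      then show "card I \<le> x"
        using x(2) by simp
    qed (use x in simp)
    finally show "measure M {\<omega> \<in> space M. x * s < (\<Sum>i\<in>I. Y i \<omega>)} \<le> exp (- (c/16) * x powr \<alpha>)" .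
  qed
qed

lemma block_count_exists:
  fixes C \<theta> r :: real
  assumes "1 \<le> C" "0 \<le> r" "C powr (2/3) < \<theta>" "\<theta> < r powr (2/3)"
  obtains k :: nat where "1 \<le> k" "real k < r" "C < r / real k"
    "real k * C \<le> \<theta> powr (3/2)" "\<theta> powr (3/2) \<le> 2 * C * real k"
proof -
  define p where "p = \<theta> powr (3/2)"
  have "0 < \<theta>"
    using assms(3) powr_ge_zero[of C "2/3"] by linarith
  have "C < p"
    using powr_less_mono2[of "3/2" "C powr (2/3)" \<theta>] assms \<open>0 < \<theta>\<close> by (simp add: p_def powr_powr)
  have "p < r"
    using powr_less_mono2[of "3/2" \<theta> "r powr (2/3)"] assms \<open>0 < \<theta>\<close> by (simp add: p_def powr_powr)
  define k where "k = nat \<lfloor>p / C\<rfloor>"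
  have "1 \<le> \<lfloor>p / C\<rfloor>"
    using \<open>C < p\<close> \<open>1 \<le> C\<close> by (simp add: le_floor_iff)
  moreover have k: "real k = \<lfloor>p / C\<rfloor>"
    using \<open>1 \<le> \<lfloor>p / C\<rfloor>\<close> by (simp add: k_def)
  ultimately have "1 \<le> k"
    by linarith
  have "real k \<le> p / C"
    using k of_int_floor_le[of "p / C"] by linarith
  then have "real k * C \<le> p"
    using \<open>1 \<le> C\<close> by (simp add: pos_le_divide_eq)
  have "p / C < real k + 1"
    using k real_of_int_floor_add_one_gt[of "p / C"] by linarith
  then have "p < (real k + 1) * C"
    using \<open>1 \<le> C\<close> by (simp add: pos_divide_less_eq)
  also have "\<dots> \<le> 2 * C * real k"
    using \<open>1 \<le> k\<close> \<open>1 \<le> C\<close> by (simp add: algebra_simps)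
  finally have "p \<le> 2 * C * real k"
    by simp
  have "real k \<le> real k * C"
    using mult_left_mono[OF \<open>1 \<le> C\<close>, of "real k"] by simp
  then have "real k < r"
    using \<open>real k * C \<le> p\<close> \<open>p < r\<close> by linarith
  have "C < r / real k"
    using \<open>real k * C \<le> p\<close> \<open>p < r\<close> \<open>1 \<le> k\<close> by (simp add: pos_less_divide_eq mult.commute)
  show ?thesis
    using that \<open>1 \<le> k\<close> \<open>real k < r\<close> \<open>C < r / real k\<close> \<open>real k * C \<le> p\<close> \<open>p \<le> 2 * C * real k\<close>
    by (simp add: p_def)
qed

lemma linear_le_block_scale:
  fixes A C \<theta> k :: real
  assumes "0 \<le> A" "0 \<le> C" "A^3 \<le> C^2" "0 < \<theta>" "0 < k" "k * C \<le> \<theta> powr (3/2)"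
  shows "A * k \<le> \<theta> * k powr (1/3)"
proof -
  have "(A * k)^3 = A^3 * k^2 * k"
    by (simp add: power2_eq_square power3_eq_cube)
  also have "\<dots> \<le> C^2 * k^2 * k"
    using assms by (intro mult_right_mono) auto
  also have "\<dots> = (k * C)^2 * k"
    by (simp add: power_mult_distrib)
  also have "\<dots> \<le> (\<theta> powr (3/2))^2 * k"
    using assms by (intro mult_right_mono power_mono) auto
  also have "\<dots> = (\<theta> * k powr (1/3))^3"
    using assms by (simp add: power_mult_distrib powr_power)
  finally have "(A * k)^3 \<le> (\<theta> * k powr (1/3))^3" .
  then show ?thesis
    using assms by simp
qed

lemma block_scale_powr_ge:
  fixes \<alpha> C \<theta> k :: real
  assumes "0 \<le> \<alpha>" "0 < C" "0 < \<theta>" "0 < k" "\<theta> powr (3/2) \<le> 2 * C * k"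
  shows "\<theta> powr (3 * \<alpha> / 2) * (2 * C) powr (- \<alpha> / 3) \<le> (\<theta> * k powr (1/3)) powr \<alpha>"
proof -
  have "\<theta> powr (\<alpha> / 2) * (2 * C) powr (- \<alpha> / 3) = (\<theta> powr (3/2) / (2 * C)) powr (\<alpha> / 3)"
    using assms by (simp add: powr_divide powr_powr powr_minus_divide)
  also have "\<dots> \<le> k powr (\<alpha> / 3)"
    using assms by (intro powr_mono2) (auto simp: field_simps)
  finally have "\<theta> powr \<alpha> * (\<theta> powr (\<alpha> / 2) * (2 * C) powr (- \<alpha> / 3)) \<le> \<theta> powr \<alpha> * k powr (\<alpha> / 3)"
    by (intro mult_left_mono) auto
  moreover have "\<theta> powr (3 * \<alpha> / 2) = \<theta> powr \<alpha> * \<theta> powr (\<alpha> / 2)"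
    by (simp flip: powr_add)
  moreover have "(\<theta> * k powr (1/3)) powr \<alpha> = \<theta> powr \<alpha> * k powr (\<alpha> / 3)"
    using assms by (simp add: powr_mult powr_powr)
  ultimately show ?thesis
    by (simp add: mult.assoc)
qed

lemma block_choice:
  fixes A C x1 \<alpha> \<theta> :: real and r :: nat
  assumes "1 \<le> A" "A^2 \<le> C" "0 \<le> \<alpha>" "max x1 (C powr (2/3)) < \<theta>" "\<theta> < real r powr (2/3)"
  obtains k :: nat where "1 \<le> k" "k \<le> r" "C < real r / real k"
    and "x1 \<le> \<theta> * real k powr (1/3)" "A * real k \<le> \<theta> * real k powr (1/3)"
    and "\<theta> powr (3 * \<alpha> / 2) * (2 * C) powr (- \<alpha> / 3) \<le> (\<theta> * real k powr (1/3)) powr \<alpha>"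
proof -
  have "1 \<le> A^2"
    using \<open>1 \<le> A\<close> by simp
  then have "1 \<le> C"
    using \<open>A^2 \<le> C\<close> by linarith
  have "A^3 \<le> A^4"
    using \<open>1 \<le> A\<close> by (intro power_increasing) auto
  also have "\<dots> = (A^2)^2"
    by simp
  also have "\<dots> \<le> C^2"
    using assms(1,2) by (intro power_mono) auto
  finally have "A^3 \<le> C^2" .
  have "0 < \<theta>"
    using assms(4) powr_ge_zero[of C "2/3"] by linarith
  obtain k where k: "1 \<le> k" "real k < real r" "C < real r / real k"
    "real k * C \<le> \<theta> powr (3/2)" "\<theta> powr (3/2) \<le> 2 * C * real k"
    using block_count_exists[of C "real r" \<theta>] \<open>1 \<le> C\<close> assms(4,5) by auto
  have "1 \<le> real k powr (1/3)"
    using k(1) by (simp add: ge_one_powr_ge_zero)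
  then have "\<theta> \<le> \<theta> * real k powr (1/3)"
    using \<open>0 < \<theta>\<close> by simp
  show ?thesis
  proof (rule that)
    show "1 \<le> k" "k \<le> r" "C < real r / real k"
      using k by simp_all
    show "x1 \<le> \<theta> * real k powr (1/3)"
      using assms(4) \<open>\<theta> \<le> \<theta> * real k powr (1/3)\<close> by simp
    show "A * real k \<le> \<theta> * real k powr (1/3)"
      using \<open>1 \<le> A\<close> \<open>1 \<le> C\<close> \<open>A^3 \<le> C^2\<close> \<open>0 < \<theta>\<close> k by (intro linear_le_block_scale) auto
    show "\<theta> powr (3 * \<alpha> / 2) * (2 * C) powr (- \<alpha> / 3) \<le> (\<theta> * real k powr (1/3)) powr \<alpha>"
      using \<open>0 \<le> \<alpha>\<close> \<open>1 \<le> C\<close> \<open>0 < \<theta>\<close> k by (intro block_scale_powr_ge) auto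
  qed
qed

lemma (in prob_space) prob_less_le_dominating:
  fixes Z U :: "'a \<Rightarrow> real"
  assumes "\<And>\<omega>. \<omega> \<in> space M \<Longrightarrow> Z \<omega> \<le> U \<omega>" and [measurable]: "U \<in> borel_measurable M"
  shows "prob {\<omega> \<in> space M. y < Z \<omega>} \<le> prob {\<omega> \<in> space M. y < U \<omega>}"
proof (rule finite_measure_mono)
  show "{\<omega> \<in> space M. y < Z \<omega>} \<subseteq> {\<omega> \<in> space M. y < U \<omega>}"
    using assms(1) by (auto intro: order.strict_trans2)
qed measurable

theorem proposition2p3:
  fixes c \<alpha> \<theta>0 r0 :: real
  assumes "0 < \<alpha>" and "\<alpha> \<le> 1" and "0 < c"
  shows "\<exists>\<theta>t0 c'. c' > 0 \<and>
    (\<forall>(M :: 'a measure) (Y :: nat \<Rightarrow> nat \<Rightarrow> nat \<Rightarrow> 'a \<Rightarrow> real) (Yr :: nat \<Rightarrow> 'a \<Rightarrow> real).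
      prob_space M \<longrightarrow>
      (\<forall>r k i. 1 \<le> k \<and> k \<le> r \<and> i \<in> {1..k} \<longrightarrow> Y r k i \<in> borel_measurable M) \<longrightarrow>
      (\<forall>r k. 1 \<le> k \<and> k \<le> r \<longrightarrow>
         prob_space.indep_vars M (\<lambda>_. borel) (\<lambda>i. Y r k i) {1..k}) \<longrightarrow>
      (\<forall>r k i \<theta>. 1 \<le> k \<and> k \<le> r \<and> i \<in> {1..k} \<and> real r / real k > r0 \<and> \<theta> > \<theta>0 \<longrightarrow>
         measure M {x \<in> space M. Y r k i x > \<theta> * (real r / real k) powr (1/3)}
           \<le> exp (- c * \<theta> powr \<alpha>)) \<longrightarrow>
      (\<forall>r. Yr r \<in> borel_measurable M) \<longrightarrow>
      (\<forall>r k. 1 \<le> r \<and> 1 \<le> k \<and> k \<le> r \<and> real r / real k > r0 \<longrightarrow>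
         (\<forall>x \<in> space M. Yr r x \<le> (\<Sum>i\<in>{1..k}. Y r k i x))) \<longrightarrow>
      (\<forall>r \<theta>. 1 \<le> r \<and> real r > r0 \<and> \<theta>t0 < \<theta> \<and> \<theta> < real r powr (2/3) \<longrightarrow>
         measure M {x \<in> space M. Yr r x > \<theta> * real r powr (1/3)}
           \<le> exp (- c' * \<theta> powr (3 * \<alpha> / 2))))"
proof -
  from indep_sum_stretched_exp_tail[OF assms, of \<theta>0, where 'a = 'a and 'i = nat]
  show ?thesis
  proof cases
    case (1 A x1)
    note sum_tail = "1"(2)
    define C where "C = max (r0 + 1) (A^2)"
    define c' where "c' = c/16 * (2 * C) powr (- \<alpha> / 3)"
    have "1 \<le> A^2" and "r0 < C"
      using \<open>1 \<le> A\<close> by (simp_all add: C_def)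
    show ?thesis
    proof (rule exI[of _ "max x1 (C powr (2/3))"], rule exI[of _ c'], intro conjI allI impI)
      show "0 < c'"
        using \<open>0 < c\<close> \<open>1 \<le> A^2\<close> by (simp add: c'_def C_def)
      fix M :: "'a measure" and Y :: "nat \<Rightarrow> nat \<Rightarrow> nat \<Rightarrow> 'a \<Rightarrow> real" and Yr :: "nat \<Rightarrow> 'a \<Rightarrow> real"
        and r :: nat and \<theta> :: real
      assume "prob_space M"
        and meas: "\<forall>r k i. 1 \<le> k \<and> k \<le> r \<and> i \<in> {1..k} \<longrightarrow> Y r k i \<in> borel_measurable M"
        and indep: "\<forall>r k. 1 \<le> k \<and> k \<le> r \<longrightarrow> prob_space.indep_vars M (\<lambda>_. borel) (\<lambda>i. Y r k i) {1..k}"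
        and tail: "\<forall>r k i \<theta>. 1 \<le> k \<and> k \<le> r \<and> i \<in> {1..k} \<and> real r / real k > r0 \<and> \<theta> > \<theta>0 \<longrightarrow>
          measure M {x \<in> space M. Y r k i x > \<theta> * (real r / real k) powr (1/3)} \<le> exp (- c * \<theta> powr \<alpha>)"
        and "\<forall>r. Yr r \<in> borel_measurable M"
          \<comment> \<open>not needed: only the dominating block sums have to be measurable\<close>
        and dom: "\<forall>r k. 1 \<le> r \<and> 1 \<le> k \<and> k \<le> r \<and> real r / real k > r0 \<longrightarrow>
          (\<forall>x \<in> space M. Yr r x \<le> (\<Sum>i\<in>{1..k}. Y r k i x))"
        and r\<theta>: "1 \<le> r \<and> real r > r0 \<and> max x1 (C powr (2/3)) < \<theta> \<and> \<theta> < real r powr (2/3)"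
      interpret prob_space M
        by fact
      obtain k where k: "1 \<le> k" "k \<le> r" "C < real r / real k"
        and x: "x1 \<le> \<theta> * real k powr (1/3)" "A * real k \<le> \<theta> * real k powr (1/3)"
          "\<theta> powr (3 * \<alpha> / 2) * (2 * C) powr (- \<alpha> / 3) \<le> (\<theta> * real k powr (1/3)) powr \<alpha>"
        using block_choice[of A C \<alpha> x1 \<theta> r] \<open>1 \<le> A\<close> \<open>0 < \<alpha>\<close> r\<theta> by (auto simp: C_def)
      have "r0 < real r / real k"
        using k(3) \<open>r0 < C\<close> by linarith
      have [measurable]: "(\<lambda>\<omega>. \<Sum>i\<in>{1..k}. Y r k i \<omega>) \<in> borel_measurable M"
        using meas k by (intro borel_measurable_sum) auto
      define x where "x = \<theta> * real k powr (1/3)"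
      have scale: "\<theta> * real r powr (1/3) = x * (real r / real k) powr (1/3)"
        using k by (simp add: x_def powr_divide)
      have "Yr r \<omega> \<le> (\<Sum>i\<in>{1..k}. Y r k i \<omega>)" if "\<omega> \<in> space M" for \<omega>
        using dom r\<theta> k \<open>r0 < real r / real k\<close> that by blast
      then have "measure M {\<omega> \<in> space M. Yr r \<omega> > \<theta> * real r powr (1/3)}
          \<le> prob {\<omega> \<in> space M. x * (real r / real k) powr (1/3) < (\<Sum>i\<in>{1..k}. Y r k i \<omega>)}"
        unfolding scale by (rule prob_less_le_dominating) measurable
      also have "\<dots> \<le> exp (- (c/16) * x powr \<alpha>)"
        by (rule sum_tail) (use \<open>prob_space M\<close> meas indep tail k \<open>r0 < real r / real k\<close> x in \<open>auto simp: x_def\<close>)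
      also have "\<dots> \<le> exp (- c' * \<theta> powr (3 * \<alpha> / 2))"
        using mult_left_mono[OF x(3), of "c/16"] \<open>0 < c\<close> by (simp add: c'_def x_def mult_ac)
      finally show "measure M {x \<in> space M. Yr r x > \<theta> * real r powr (1/3)} \<le> exp (- c' * \<theta> powr (3 * \<alpha> / 2))" .
    qed
  qed
qed

end
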